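(* Let $G$ be an infinite group. Then: (1) the family of all small subsets of $G$ and the family of all sparse subsets of $G$ are both $\nabla$-complete; (2) if $\mathcal{I}$ is a nonempty family of subsets of $G$ closed under finite unions and under taking subsets which is both $\Delta$-complete and $\nabla$-complete, then $\mathcal{I}=\mathcal{P}_G$ (in particular, no ideal of $\mathcal{P}_G$ is both $\Delta$-complete and $\nabla$-complete); (3) if $\mathcal{I}$ is a group ideal in $\mathcal{P}_G$, then $\mathcal{I}$ is $\Delta$-complete and every member of $\mathcal{I}$ is a small subset of $G$.
   Context: $\Delta(A)=\{g\in G: gA\cap A$ is infinite$\}$ and $\nabla(A)=\{B\subseteq G:\Delta(B)=A\}$. A family $\mathcal{F}$ of subsets of $G$ is $\Delta$-complete if $\Delta(A)\in\mathcal{F}$ for each $A\in\mathcal{F}$, and $\nabla$-complete if $\nabla(A)\subseteq\mathcal{F}$ for each $A\in\mathcal{F}$. An ideal in $\mathcal{P}_G$ is a family $\mathcal{I}$ of subsets with $G\notin\mathcal{I}$, closed under finite unions and subsets; it is a group ideal if it contains all finite subsets and $A,B\in\mathcal{I}$ imply $AB^{-1}\in\mathcal{I}$. $A$ is large if $G=FA$ for some finite $F$; small if $L\setminus A$ is large for every large $L$. $A$ is sparse if for every infinite $X\subseteq G$ there is finite $F\subseteq X$ with $\bigcap_{g\in F}gA$ finite. *)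

theory Defs
  imports Main
begin

text \<open>The group G is the universe of a type of class group_add (written additively:
  gA is (+) g ` A and A B^-1 is the set of all a - b).\<close>

definition Delta :: "'a::group_add set \<Rightarrow> 'a set" where
  "Delta A = {g. infinite (((+) g ` A) \<inter> A)}"

definition Nabla :: "'a::group_add set \<Rightarrow> 'a set set" where
  "Nabla A = {B. Delta B = A}"

definition Delta_complete :: "'a::group_add set set \<Rightarrow> bool" where
  "Delta_complete F \<longleftrightarrow> (\<forall>A\<in>F. Delta A \<in> F)"

definition Nabla_complete :: "'a::group_add set set \<Rightarrow> bool" where
  "Nabla_complete F \<longleftrightarrow> (\<forall>A\<in>F. Nabla A \<subseteq> F)"

definition set_mult :: "'a::group_add set \<Rightarrow> 'a set \<Rightarrow> 'a set" where
  "set_mult F A = {f + a | f a. f \<in> F \<and> a \<in> A}"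

definition set_div :: "'a::group_add set \<Rightarrow> 'a set \<Rightarrow> 'a set" where
  "set_div A B = {a - b | a b. a \<in> A \<and> b \<in> B}"

definition large :: "'a::group_add set \<Rightarrow> bool" where
  "large A \<longleftrightarrow> (\<exists>F. finite F \<and> set_mult F A = UNIV)"

definition small :: "'a::group_add set \<Rightarrow> bool" where
  "small A \<longleftrightarrow> (\<forall>L. large L \<longrightarrow> large (L - A))"

definition sparse :: "'a::group_add set \<Rightarrow> bool" where
  "sparse A \<longleftrightarrow> (\<forall>X. infinite X \<longrightarrow>
      (\<exists>F. F \<subseteq> X \<and> finite F \<and> finite (\<Inter>g\<in>F. (+) g ` A)))"

definition ideal_of :: "'a set set \<Rightarrow> bool" where
  "ideal_of I \<longleftrightarrow> UNIV \<notin> I \<and> {} \<in> I \<and>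
      (\<forall>A\<in>I. \<forall>B\<in>I. A \<union> B \<in> I) \<and> (\<forall>A\<in>I. \<forall>B. B \<subseteq> A \<longrightarrow> B \<in> I)"

definition group_ideal :: "'a::group_add set set \<Rightarrow> bool" where
  "group_ideal I \<longleftrightarrow> ideal_of I \<and> (\<forall>A. finite A \<longrightarrow> A \<in> I) \<and>
      (\<forall>A\<in>I. \<forall>B\<in>I. set_div A B \<in> I)"

end

theory Submission
  imports Defs
begin

text \<open>
  The two \<open>\<nabla>\<close>-completeness statements are proved as contrapositives. Suppose \<open>L\<close> is large,
  \<open>L - B\<close> is not, and \<open>G = F + L\<close>. If some \<open>g\<close> lay in no \<open>f\<^sub>2 + \<Delta>(B) - f\<^sub>1\<close>, all the sets
  \<open>(f\<^sub>1 + B) \<inter> (-g + f\<^sub>2 + B)\<close> would be finite; as \<open>L - B\<close> is not large, some \<open>x\<close> avoids them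
  and the translates of \<open>L - B\<close> by \<open>F \<union> (-g + F)\<close>, yet \<open>x \<in> f\<^sub>1 + L\<close> and \<open>g + x \<in> f\<^sub>2 + L\<close>
  put \<open>x\<close> into one of them. So finitely many translates of \<open>\<Delta>(B)\<close> cover \<open>G\<close>. If \<open>X\<close> witnesses
  that \<open>B\<close> is not sparse, it also witnesses it for \<open>\<Delta>(B)\<close>, because \<open>(z + B) \<inter> (y + B)\<close> is
  infinite exactly when \<open>-y + z \<in> \<Delta>(B)\<close>.

  A family closed under subsets and \<open>\<nabla>\<close>-complete contains every set with finite \<open>\<Delta>\<close>, in
  particular every thin set. Choosing \<open>\<phi>(g, n)\<close> by transfinite recursion of length \<open>|G|\<close> so
  that neither \<open>\<phi>\<close> nor \<open>(g, n) \<mapsto> g + \<phi>(g, n)\<close> ever takes a value \<open>p - q + s\<close> of earlier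
  values makes both ranges thin, while their union \<open>B\<close> has \<open>\<Delta>(B) = G\<close>; so \<open>\<Delta>\<close>-completeness
  forces \<open>G\<close> into the family.

  In a group ideal \<open>\<Delta>(A) \<subseteq> A - A\<close>, and the complement of a member \<open>B\<close> is large because
  some \<open>g \<notin> B - B\<close> gives \<open>G = (G - B) \<union> (-g + (G - B))\<close>. If \<open>G = F + L\<close>, then \<open>F + A\<close>
  belongs to the ideal and its complement lies in \<open>F + (L - A)\<close>, so \<open>L - A\<close> is large.
\<close>

unbundle cardinal_syntax

lemma mem_translate_iff: "(x::'a::group_add) \<in> (+) k ` A \<longleftrightarrow> -k + x \<in> A"
proof
  assume "x \<in> (+) k ` A"
  then show "-k + x \<in> A" by (auto simp: add.assoc[symmetric])
next
  assume "-k + x \<in> A"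
  then have "k + (-k + x) \<in> (+) k ` A" by blast
  then show "x \<in> (+) k ` A" by (simp add: add.assoc[symmetric])
qed

lemma set_mult_eq_UN: "set_mult F A = (\<Union>f\<in>F. (+) f ` A)"
  unfolding set_mult_def by auto

lemma mem_set_mult_iff: "x \<in> set_mult F A \<longleftrightarrow> (\<exists>f\<in>F. -f + x \<in> A)"
  by (simp add: set_mult_eq_UN mem_translate_iff)

lemma set_mult_mono: "B \<subseteq> C \<Longrightarrow> set_mult F B \<subseteq> set_mult F C"
  unfolding set_mult_def by auto

lemma set_mult_assoc: "set_mult K (set_mult F A) = set_mult (set_mult K F) A"
proof (intro set_eqI iffI)
  fix x assume "x \<in> set_mult K (set_mult F A)"
  then obtain k f a where "k \<in> K" "f \<in> F" "a \<in> A" "x = (k + f) + a"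
    unfolding set_mult_def by (auto simp: add.assoc)
  then show "x \<in> set_mult (set_mult K F) A" unfolding set_mult_def by blast
next
  fix x assume "x \<in> set_mult (set_mult K F) A"
  then obtain k f a where "k \<in> K" "f \<in> F" "a \<in> A" "x = k + (f + a)"
    unfolding set_mult_def by (auto simp: add.assoc)
  then show "x \<in> set_mult K (set_mult F A)" unfolding set_mult_def by blast
qed

lemma finite_set_mult: "finite K \<Longrightarrow> finite F \<Longrightarrow> finite (set_mult K F)"
  unfolding set_mult_eq_UN by simp

lemma set_mult_translate_right:
  "set_mult F ((\<lambda>x. x + c) ` A) = (\<lambda>x. x + c) ` set_mult F A"
  unfolding set_mult_eq_UN image_UN image_image by (simp add: add.assoc)

lemma large_if_subset_set_mult:
  assumes "large M" "M \<subseteq> set_mult F N" "finite F"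
  shows "large N"
proof -
  obtain K where K: "finite K" "set_mult K M = UNIV" using assms(1) unfolding large_def by blast
  have "UNIV \<subseteq> set_mult (set_mult K F) N"
    using set_mult_mono[OF assms(2), of K] K(2) by (simp add: set_mult_assoc)
  then show ?thesis unfolding large_def using finite_set_mult[OF K(1) assms(3)] by blast
qed

lemma large_translate_left: "large L \<Longrightarrow> large ((+) c ` L)"
  by (erule large_if_subset_set_mult[of _ "{-c}"]) (auto simp: mem_set_mult_iff)

lemma large_translate_right:
  assumes "large L" shows "large ((\<lambda>x. x + c) ` L)"
proof -
  obtain F where "finite F" "set_mult F L = UNIV" using assms unfolding large_def by blast
  moreover from this have "set_mult F ((\<lambda>x. x + c) ` L) = UNIV"
    by (simp add: set_mult_translate_right)
  ultimately show ?thesis unfolding large_def by blast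
qed

lemma large_UNIV: "large UNIV"
  unfolding large_def set_mult_def by (rule exI[of _ "{0}"]) auto

lemma not_large_empty: "\<not> large {}"
  unfolding large_def set_mult_def by auto

lemma ex_not_mem_set_mult_if_not_large:
  assumes "\<not> large M" "finite K" "finite S" "infinite (UNIV :: 'a::group_add set)"
  shows "\<exists>x::'a. x \<notin> S \<and> x \<notin> set_mult K M"
proof (cases "M = {}")
  case True
  then have "set_mult K M = {}" unfolding set_mult_def by simp
  then show ?thesis using assms(3,4) ex_new_if_finite by blast
next
  case False
  then obtain m where m: "m \<in> M" by blast
  have "s \<in> set_mult ((\<lambda>s. s - m) ` S) M" if "s \<in> S" for s
  proof -
    have "s = (s - m) + m" by simp
    then show ?thesis unfolding set_mult_def using m that by blast
  qed
  then have "S \<union> set_mult K M \<subseteq> set_mult (K \<union> (\<lambda>s. s - m) ` S) M"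
    unfolding set_mult_eq_UN by blast
  moreover have "finite (K \<union> (\<lambda>s. s - m) ` S)" using assms(2,3) by simp
  then have "set_mult (K \<union> (\<lambda>s. s - m) ` S) M \<noteq> UNIV"
    using assms(1) unfolding large_def by blast
  ultimately show ?thesis by blast
qed

lemma small_Un:
  assumes "small A" "small B" shows "small (A \<union> B)"
  unfolding small_def
proof (intro allI impI)
  fix L :: "'a set" assume "large L"
  then have "large (L - A - B)" using assms unfolding small_def by blast
  moreover have "L - A - B = L - (A \<union> B)" by blast
  ultimately show "large (L - (A \<union> B))" by simp
qed

lemma small_empty: "small {}"
  unfolding small_def by simp

lemma small_UN: "finite X \<Longrightarrow> (\<And>x. x \<in> X \<Longrightarrow> small (h x)) \<Longrightarrow> small (\<Union>x\<in>X. h x)"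
  by (induction X rule: finite_induct) (auto intro: small_Un small_empty)

lemma not_small_UNIV: "\<not> small UNIV"
  unfolding small_def using large_UNIV not_large_empty by auto

lemma small_image_bij:
  fixes \<tau> \<sigma> :: "'a::group_add \<Rightarrow> 'a"
  assumes inv: "\<And>x. \<tau> (\<sigma> x) = x" "\<And>x. \<sigma> (\<tau> x) = x"
    and large: "\<And>L. large L \<Longrightarrow> large (\<tau> ` L)" "\<And>L. large L \<Longrightarrow> large (\<sigma> ` L)"
    and "small A"
  shows "small (\<tau> ` A)"
  unfolding small_def
proof (intro allI impI)
  fix L :: "'a set" assume "large L"
  then have "large (\<tau> ` (\<sigma> ` L - A))" using large \<open>small A\<close> unfolding small_def by blast
  moreover have "inj \<tau>" by (rule inj_on_inverseI[where g = \<sigma>]) (rule inv(2))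
  then have "\<tau> ` (\<sigma> ` L - A) = L - \<tau> ` A"
    by (simp add: image_set_diff image_image inv(1))
  ultimately show "large (L - \<tau> ` A)" by simp
qed

lemma small_translate_left: "small A \<Longrightarrow> small ((+) c ` A)"
  by (rule small_image_bij[where \<sigma> = "(+) (-c)"])
    (simp_all add: add.assoc[symmetric] large_translate_left)

lemma small_translate_right: "small A \<Longrightarrow> small ((\<lambda>x. x + c) ` A)"
  using large_translate_right[of _ "-c"]
  by (intro small_image_bij[where \<sigma> = "\<lambda>x. x - c"]) (simp_all add: large_translate_right)

lemma translates_Int_eq: "(+) (z::'a::group_add) ` B \<inter> (+) y ` B = (+) y ` ((+) (-y + z) ` B \<inter> B)"
proof -
  have "(+) y ` (+) (-y + z) ` B = (+) z ` B"
    unfolding image_image by (simp add: add.assoc[symmetric])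
  then show ?thesis by (simp add: image_Int)
qed

lemma finite_translates_Int_iff: "finite ((+) z ` B \<inter> (+) y ` B) \<longleftrightarrow> -y + z \<notin> Delta B"
  unfolding translates_Int_eq Delta_def by (simp add: finite_image_iff)

lemma sparse_if_sparse_Delta:
  assumes "sparse (Delta B)" shows "sparse B"
proof (rule ccontr)
  assume "\<not> sparse B"
  then obtain X where X: "infinite X" "\<And>F. F \<subseteq> X \<Longrightarrow> finite F \<Longrightarrow> infinite (\<Inter>g\<in>F. (+) g ` B)"
    unfolding sparse_def by blast
  have "X \<subseteq> (\<Inter>g\<in>F. (+) g ` Delta B)" if "F \<subseteq> X" for F
  proof (intro subsetI INT_I)
    fix z y assume "z \<in> X" "y \<in> F"
    then have "infinite ((+) z ` B \<inter> (+) y ` B)" using X(2)[of "{z, y}"] that by auto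
    then show "z \<in> (+) y ` Delta B" by (simp add: finite_translates_Int_iff mem_translate_iff)
  qed
  then have "infinite (\<Inter>g\<in>F. (+) g ` Delta B)" if "F \<subseteq> X" for F
    using X(1) that by (meson finite_subset)
  then show False using assms X(1) unfolding sparse_def by blast
qed

lemma ex_translate_mem_Delta:
  fixes B :: "'a::group_add set"
  assumes inf: "infinite (UNIV :: 'a set)"
    and L: "\<not> large (L - B)" and F: "finite F" "set_mult F L = UNIV"
  shows "\<exists>f1\<in>F. \<exists>f2\<in>F. -f2 + g + f1 \<in> Delta B"
proof (rule ccontr)
  assume none: "\<not> ?thesis"
  define S where "S = (\<Union>f1\<in>F. \<Union>f2\<in>F. (+) f1 ` B \<inter> (+) (-g + f2) ` B)"
  have "finite ((+) f1 ` B \<inter> (+) (-g + f2) ` B)" if "f1 \<in> F" "f2 \<in> F" for f1 f2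
    using none that finite_translates_Int_iff[of f1 B "-g + f2"] by (simp add: minus_add add.assoc)
  then have "finite S" unfolding S_def by (intro finite_UN_I F(1))
  moreover have "finite (F \<union> (+) (-g) ` F)" using F(1) by simp
  ultimately obtain x where x: "x \<notin> S" "x \<notin> set_mult (F \<union> (+) (-g) ` F) (L - B)"
    using ex_not_mem_set_mult_if_not_large[OF L _ _ inf] by meson
  have in_B: "x \<in> (+) k ` B" if "k \<in> F \<union> (+) (-g) ` F" "-k + x \<in> L" for k
  proof -
    have "x \<notin> (+) k ` (L - B)" using x(2) that(1) unfolding set_mult_eq_UN by blast
    then show ?thesis using that(2) by (simp add: mem_translate_iff)
  qed
  have "x \<in> set_mult F L" "g + x \<in> set_mult F L" using F(2) by simp_all
  then obtain f1 f2 where f1: "f1 \<in> F" "-f1 + x \<in> L" and f2: "f2 \<in> F" "-f2 + (g + x) \<in> L"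
    unfolding mem_set_mult_iff by blast
  have "-(-g + f2) + x = -f2 + (g + x)" by (simp add: minus_add add.assoc)
  then have "x \<in> (+) f1 ` B \<inter> (+) (-g + f2) ` B"
    using in_B[of f1] in_B[of "-g + f2"] f1 f2 by simp
  then have "x \<in> S" unfolding S_def using f1(1) f2(1) by blast
  with x(1) show False ..
qed

lemma small_if_small_Delta:
  assumes inf: "infinite (UNIV :: 'a::group_add set)" and small: "small (Delta B)"
  shows "small (B :: 'a set)"
proof (rule ccontr)
  assume "\<not> small B"
  then obtain L where L: "large L" "\<not> large (L - B)" unfolding small_def by blast
  obtain F where F: "finite F" "set_mult F L = UNIV" using L(1) unfolding large_def by blast
  have "UNIV \<subseteq> (\<Union>f1\<in>F. \<Union>f2\<in>F. (\<lambda>x. x + -f1) ` (+) f2 ` Delta B)"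
  proof
    fix g :: 'a
    obtain f1 f2 where "f1 \<in> F" "f2 \<in> F" "-f2 + g + f1 \<in> Delta B"
      using ex_translate_mem_Delta[OF inf L(2) F] by blast
    moreover have "g = (f2 + (-f2 + g + f1)) + -f1" by (simp add: add.assoc[symmetric])
    ultimately show "g \<in> (\<Union>f1\<in>F. \<Union>f2\<in>F. (\<lambda>x. x + -f1) ` (+) f2 ` Delta B)" by blast
  qed
  moreover have "small (\<Union>f1\<in>F. \<Union>f2\<in>F. (\<lambda>x. x + -f1) ` (+) f2 ` Delta B)"
    by (intro small_UN small_translate_right small_translate_left F(1) small)
  ultimately show False using not_small_UNIV by (metis top.extremum_uniqueI)
qed

lemma group_idealD:
  assumes "group_ideal I"
  shows "UNIV \<notin> I" and "finite A \<Longrightarrow> A \<in> I" and "A \<in> I \<Longrightarrow> B \<subseteq> A \<Longrightarrow> B \<in> I"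
    and "A \<in> I \<Longrightarrow> B \<in> I \<Longrightarrow> set_div A B \<in> I"
  using assms unfolding group_ideal_def ideal_of_def by simp_all

lemma Delta_subset_set_div: "Delta A \<subseteq> set_div A A"
proof
  fix g assume "g \<in> Delta A"
  then have "(+) g ` A \<inter> A \<noteq> {}" unfolding Delta_def by auto
  then obtain a where "a \<in> A" "g + a \<in> A" by auto
  moreover have "g = (g + a) - a" by simp
  ultimately show "g \<in> set_div A A" unfolding set_div_def by blast
qed

lemma group_ideal_Delta:
  assumes "group_ideal I" "A \<in> I" shows "Delta A \<in> I"
  using group_idealD(3)[OF assms(1) group_idealD(4)[OF assms(1,2,2)] Delta_subset_set_div] .

lemma set_mult_eq_set_div: "set_mult F A = set_div F (set_div {0} A)"
proof (intro set_eqI iffI)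
  fix y assume "y \<in> set_mult F A"
  then obtain f a where "f \<in> F" "a \<in> A" "y = f - (0 - a)" unfolding set_mult_def by auto
  then show "y \<in> set_div F (set_div {0} A)" unfolding set_div_def by blast
next
  fix y assume "y \<in> set_div F (set_div {0} A)"
  then obtain f a where "f \<in> F" "a \<in> A" "y = f + a" unfolding set_div_def by auto
  then show "y \<in> set_mult F A" unfolding set_mult_def by blast
qed

lemma large_Compl_group_ideal:
  assumes I: "group_ideal I" and "B \<in> I"
  shows "large (- B)"
proof -
  have "set_div B B \<noteq> UNIV" using group_idealD(1)[OF I] group_idealD(4)[OF I \<open>B \<in> I\<close> \<open>B \<in> I\<close>] by auto
  then obtain g where g: "g \<notin> set_div B B" by blast
  have "g + y \<notin> B" if "y \<in> B" for y
  proof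
    assume "g + y \<in> B"
    moreover have "g = (g + y) - y" by simp
    ultimately show False using g that unfolding set_div_def by blast
  qed
  then have "y \<in> set_mult {0, -g} (- B)" for y
    by (cases "y \<in> B") (simp_all add: mem_set_mult_iff)
  then have "set_mult {0, -g} (- B) = UNIV" by (rule UNIV_eq_I[symmetric])
  then show ?thesis unfolding large_def by (intro exI[of _ "{0, -g}"]) simp
qed

lemma small_if_group_ideal:
  assumes I: "group_ideal I" and "A \<in> I"
  shows "small A"
  unfolding small_def
proof (intro allI impI)
  fix L :: "'a set" assume "large L"
  then obtain F where F: "finite F" "set_mult F L = UNIV" unfolding large_def by blast
  have "set_mult F A \<in> I"
    unfolding set_mult_eq_set_div using group_idealD[OF I] F(1) \<open>A \<in> I\<close> by simp
  then have "large (- set_mult F A)" by (rule large_Compl_group_ideal[OF I])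
  moreover have "- set_mult F A \<subseteq> set_mult F (L - A)"
  proof
    fix y assume "y \<in> - set_mult F A"
    moreover have "y \<in> set_mult F L" using F(2) by simp
    ultimately show "y \<in> set_mult F (L - A)" by (auto simp: mem_set_mult_iff)
  qed
  ultimately show "large (L - A)" using F(1) by (rule large_if_subset_set_mult)
qed

definition thin :: "'a::group_add set \<Rightarrow> bool" where
  "thin B \<longleftrightarrow> (\<forall>h. h \<noteq> 0 \<longrightarrow> finite ((+) h ` B \<inter> B))"

lemma finite_Delta_if_thin: "thin B \<Longrightarrow> finite (Delta B)"
  unfolding thin_def Delta_def by (rule finite_subset[of _ "{0}"]) auto

definition diff_add_triples :: "'a::group_add set \<Rightarrow> 'a set" where
  "diff_add_triples P = {p - q + s | p q s. p \<in> P \<and> q \<in> P \<and> s \<in> P}"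

locale diff_add_avoiding =
  fixes less :: "'i rel" and v :: "'i \<Rightarrow> 'a::group_add"
  assumes strict: "strict_linear_order less"
    and avoid: "\<And>t. v t \<notin> diff_add_triples (v ` {b. (b, t) \<in> less})"
begin

lemma less_total: "x \<noteq> y \<Longrightarrow> (x, y) \<in> less \<or> (y, x) \<in> less"
  using strict unfolding strict_linear_order_on_def total_on_def by blast

lemma less_trans: "(x, y) \<in> less \<Longrightarrow> (y, z) \<in> less \<Longrightarrow> (x, z) \<in> less"
  using strict unfolding strict_linear_order_on_def trans_def by blast

lemma not_diff_add_below:
  assumes "(p, t) \<in> less" "(q, t) \<in> less" "(r, t) \<in> less"
  shows "v t \<noteq> v p - v q + v r"
  using avoid[of t] assms unfolding diff_add_triples_def by blast

lemma inj: "inj v"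
proof (rule injI, rule ccontr)
  fix x y assume "v x = v y" "x \<noteq> y"
  then show False
    using less_total not_diff_add_below[of x y x x] not_diff_add_below[of y x y y] by force
qed

definition is_top_of :: "'i \<Rightarrow> 'i \<Rightarrow> 'i \<Rightarrow> bool" where
  "is_top_of t a c \<longleftrightarrow> t = a \<and> (c, t) \<in> less \<or> t = c \<and> (a, t) \<in> less"

lemma ex_is_top_of: "a \<noteq> c \<Longrightarrow> \<exists>t. is_top_of t a c"
  using less_total unfolding is_top_of_def by blast

lemma less_if_is_top_of_less:
  "is_top_of t a c \<Longrightarrow> (t, t') \<in> less \<Longrightarrow> (a, t') \<in> less \<and> (c, t') \<in> less"
  using less_trans unfolding is_top_of_def by blast

text \<open>The top of a pair cannot lie strictly above another pair with the same difference:
  it would be a difference of earlier values.\<close>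
lemma not_is_top_of_above:
  assumes "v c = h + v a" "v c' = h + v a'" "(a, t) \<in> less" "(c, t) \<in> less"
  shows "\<not> is_top_of t a' c'"
proof
  have h: "h = v c - v a" using assms(1) by (simp add: eq_diff_eq)
  assume "is_top_of t a' c'"
  then show False unfolding is_top_of_def
  proof
    assume "t = a' \<and> (c', t) \<in> less"
    moreover have "v a' = -h + v c'" by (simp add: assms(2))
    then have "v a' = v a - v c + v c'" by (simp add: h minus_diff_eq)
    ultimately show False using not_diff_add_below assms(3,4) by blast
  next
    assume "t = c' \<and> (a', t) \<in> less"
    moreover have "v c' = v c - v a + v a'" by (simp add: assms(2) h)
    ultimately show False using not_diff_add_below assms(3,4) by blast
  qed
qed

lemma is_top_of_unique:
  assumes "v c = h + v a" "v c' = h + v a'" "is_top_of t a c" "is_top_of t' a' c'"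
  shows "t = t'"
proof (rule ccontr)
  assume "t \<noteq> t'"
  then consider "(t, t') \<in> less" | "(t', t) \<in> less" using less_total by blast
  then show False
  proof cases
    case 1
    then show False
      using not_is_top_of_above[OF assms(1,2)] less_if_is_top_of_less[OF assms(3)] assms(4) by blast
  next
    case 2
    then show False
      using not_is_top_of_above[OF assms(2,1)] less_if_is_top_of_less[OF assms(4)] assms(3) by blast
  qed
qed

lemma ex_common_index:
  assumes "h \<noteq> 0"
  obtains t0 where "\<And>a c. v c = h + v a \<Longrightarrow> t0 = a \<or> t0 = c"
proof (cases "\<exists>a c. v c = h + v a")
  case True
  then obtain a0 c0 where p0: "v c0 = h + v a0" by blast
  have distinct: "a \<noteq> c" if "v c = h + v a" for a c
  proof
    assume "a = c"
    with that have "0 + v c = h + v c" by simp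
    with \<open>h \<noteq> 0\<close> show False by (metis add_right_cancel)
  qed
  obtain t0 where t0: "is_top_of t0 a0 c0" using ex_is_top_of[OF distinct[OF p0]] by blast
  have "t0 = a \<or> t0 = c" if pair: "v c = h + v a" for a c
  proof -
    obtain t where "is_top_of t a c" using ex_is_top_of[OF distinct[OF pair]] by blast
    moreover from this have "t = t0" using is_top_of_unique[OF pair p0 _ t0] by blast
    ultimately show ?thesis unfolding is_top_of_def by blast
  qed
  then show thesis by (rule that)
qed (use that in blast)

lemma thin_range: "thin (range v)"
  unfolding thin_def
proof (intro allI impI)
  fix h :: 'a assume "h \<noteq> 0"
  then obtain t0 where t0: "\<And>a c. v c = h + v a \<Longrightarrow> t0 = a \<or> t0 = c"
    using ex_common_index by blast
  have "(+) h ` range v \<inter> range v \<subseteq> {h + v t0, v t0}"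
  proof
    fix w assume "w \<in> (+) h ` range v \<inter> range v"
    then obtain a c where "w = h + v a" "w = v c" by blast
    then show "w \<in> {h + v t0, v t0}" using t0[of c a] by auto
  qed
  then show "finite ((+) h ` range v \<inter> range v)" by (rule finite_subset) simp
qed

end

lemma card_diff_add_triples_less:
  assumes inf: "infinite (UNIV :: 'a::group_add set)" and P: "|P :: 'a set| <o |UNIV :: 'a set|"
  shows "|diff_add_triples P| <o |UNIV :: 'a set|"
proof -
  have "diff_add_triples P = (\<lambda>(p, q, s). p - q + s) ` (P \<times> P \<times> P)"
    unfolding diff_add_triples_def by (auto simp: image_iff; blast)
  moreover have "|P \<times> P \<times> P| <o |UNIV :: 'a set|"
  proof (cases "finite P")
    case True
    then have "finite (P \<times> P \<times> P)" by simp
    then show ?thesis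
      using inf finite_ordLess_infinite[OF card_of_Well_order card_of_Well_order]
      unfolding Field_card_of by blast
  next
    case False
    have "|P \<times> P| \<le>o |P|" using card_of_Times_same_infinite[OF False] ordIso_iff_ordLeq by blast
    then have "|P \<times> P \<times> P| \<le>o |P \<times> P|" by (rule card_of_Times_mono2)
    also have "|P \<times> P| \<le>o |P|" by fact
    finally show ?thesis using P ordLeq_ordLess_trans by blast
  qed
  ultimately show ?thesis using card_of_image ordLeq_ordLess_trans by metis
qed

lemma (in wo_rel) exists_avoiding_worec:
  assumes local: "\<And>f g t. (\<And>b. b \<in> underS t \<Longrightarrow> f b = g b) \<Longrightarrow> Bad f t = Bad g t"
    and proper: "\<And>f t. Bad f t \<noteq> UNIV"
  shows "\<exists>\<phi>. \<forall>t. \<phi> t \<notin> Bad \<phi> t"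
proof -
  define H where "H f t = (SOME y. y \<notin> Bad f t)" for f t
  have "adm_wo H" unfolding adm_wo_def H_def using local by metis
  then have "worec H t = H (worec H) t" for t using worec_fixpoint by metis
  moreover have "H f t \<notin> Bad f t" for f t unfolding H_def using proper by (metis UNIV_eq_I someI_ex)
  ultimately show ?thesis by metis
qed

lemma card_underS_Times_nat_less:
  assumes inf: "infinite (UNIV :: 'a set)"
  shows "|underS |UNIV :: ('a \<times> nat) set| t| <o |UNIV :: 'a set|"
proof -
  have "|UNIV :: nat set| \<le>o |UNIV :: 'a set|" using inf infinite_iff_card_of_nat by blast
  then have "|UNIV :: ('a \<times> nat) set| =o |UNIV :: 'a set|"
    using card_of_Times_infinite[OF inf, of "UNIV :: nat set"] by simp
  then show ?thesis
    using card_of_underS[OF card_of_Card_order, of t UNIV] ordLess_ordIso_trans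
    by (simp add: Field_card_of)
qed

lemma exists_thin_translate_pair:
  assumes inf: "infinite (UNIV :: 'a::group_add set)"
  obtains \<phi> :: "'a \<times> nat \<Rightarrow> 'a::group_add"
  where "inj (\<lambda>p. fst p + \<phi> p)" "thin (range \<phi>)" "thin (range (\<lambda>p. fst p + \<phi> p))"
proof -
  define r where "r = |UNIV :: ('a \<times> nat) set|"
  interpret wo_rel r unfolding r_def wo_rel_def by (rule card_of_Well_order)
  have Field: "Field r = UNIV" unfolding r_def by (rule Field_card_of)
  have below_small: "|underS t| <o |UNIV :: 'a set|" for t
    unfolding r_def by (rule card_underS_Times_nat_less[OF inf])
  txt \<open>Avoiding the second set keeps \<open>(g, n) \<mapsto> g + \<phi>(g, n)\<close> off the \<open>p - q + s\<close> of its own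
    earlier values.\<close>
  define Bad where "Bad f t = diff_add_triples (f ` underS t)
      \<union> (+) (-fst t) ` diff_add_triples ((\<lambda>p. fst p + f p) ` underS t)"
    for f :: "'a \<times> nat \<Rightarrow> 'a" and t
  have "Bad f t \<noteq> UNIV" for f t
  proof -
    have "|f ` underS t| <o |UNIV :: 'a set|" "|(\<lambda>p. fst p + f p) ` underS t| <o |UNIV :: 'a set|"
      using card_of_image below_small ordLeq_ordLess_trans by blast+
    then have "|diff_add_triples (f ` underS t)| <o |UNIV :: 'a set|"
      "|(+) (-fst t) ` diff_add_triples ((\<lambda>p. fst p + f p) ` underS t)| <o |UNIV :: 'a set|"
      using card_diff_add_triples_less[OF inf] card_of_image ordLeq_ordLess_trans by blast+
    then have "|Bad f t| <o |UNIV :: 'a set|"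
      unfolding Bad_def by (rule card_of_Un_ordLess_infinite[OF inf])
    then show ?thesis using ordLess_irreflexive by force
  qed
  moreover have "Bad f t = Bad g t" if "\<And>b. b \<in> underS t \<Longrightarrow> f b = g b" for f g t
    unfolding Bad_def using that by (simp cong: image_cong)
  ultimately obtain \<phi> where \<phi>: "\<phi> t \<notin> Bad \<phi> t" for t
    using exists_avoiding_worec by metis
  have "linear_order r" using WELL Field unfolding well_order_on_def by simp
  then have strict: "strict_linear_order (r - Id)" by (rule strict_linear_order_on_diff_Id)
  have below: "{b. (b, t) \<in> r - Id} = underS t" for t unfolding underS_def by auto
  interpret \<phi>: diff_add_avoiding "r - Id" \<phi>
  proof
    show "\<phi> t \<notin> diff_add_triples (\<phi> ` {b. (b, t) \<in> r - Id})" for t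
      using \<phi>[of t] unfolding below Bad_def by blast
  qed (fact strict)
  interpret \<psi>: diff_add_avoiding "r - Id" "\<lambda>p. fst p + \<phi> p"
  proof
    show "fst t + \<phi> t \<notin> diff_add_triples ((\<lambda>p. fst p + \<phi> p) ` {b. (b, t) \<in> r - Id})" for t
      using \<phi>[of t] unfolding below Bad_def by (simp add: mem_translate_iff)
  qed (fact strict)
  show thesis using that \<psi>.inj \<phi>.thin_range \<psi>.thin_range .
qed

lemma Delta_translate_pair_eq_UNIV:
  fixes \<phi> :: "'a \<times> nat \<Rightarrow> 'a::group_add"
  assumes inj: "inj (\<lambda>p. fst p + \<phi> p)"
  shows "Delta (range \<phi> \<union> range (\<lambda>p. fst p + \<phi> p)) = UNIV"
proof (rule UNIV_eq_I[symmetric])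
  fix g
  let ?B = "range \<phi> \<union> range (\<lambda>p. fst p + \<phi> p)"
  have "inj (\<lambda>n. g + \<phi> (g, n))"
  proof (rule injI)
    fix m n assume "g + \<phi> (g, m) = g + \<phi> (g, n)"
    then show "m = n" using injD[OF inj, of "(g, m)" "(g, n)"] by simp
  qed
  then have infinite: "infinite (range (\<lambda>n. g + \<phi> (g, n)))"
    using finite_imageD[of "\<lambda>n. g + \<phi> (g, n)" UNIV] infinite_UNIV_nat by blast
  have "range (\<lambda>n. g + \<phi> (g, n)) \<subseteq> (+) g ` ?B \<inter> ?B"
  proof
    fix y assume "y \<in> range (\<lambda>n. g + \<phi> (g, n))"
    then obtain n where "y = g + \<phi> (g, n)" by blast
    then have "y \<in> (+) g ` range \<phi>" "y = (\<lambda>p. fst p + \<phi> p) (g, n)" by auto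
    then show "y \<in> (+) g ` ?B \<inter> ?B" by blast
  qed
  then have "infinite ((+) g ` ?B \<inter> ?B)" using infinite by (rule infinite_super)
  then show "g \<in> Delta ?B" unfolding Delta_def by simp
qed

lemma eq_Pow_UNIV_if_Delta_complete_Nabla_complete:
  assumes inf: "infinite (UNIV :: 'a::group_add set)"
    and "(I :: 'a set set) \<noteq> {}" and Un: "\<forall>A\<in>I. \<forall>B\<in>I. A \<union> B \<in> I"
    and sub: "\<forall>A\<in>I. \<forall>B. B \<subseteq> A \<longrightarrow> B \<in> I"
    and "Delta_complete I" "Nabla_complete I"
  shows "I = Pow UNIV"
proof -
  have "{} \<in> I" using \<open>I \<noteq> {}\<close> sub by blast
  have mem_if_Delta: "B \<in> I" if "Delta B \<in> I" for B
    using \<open>Nabla_complete I\<close> that unfolding Nabla_complete_def Nabla_def by blast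
  have mem_if_finite: "A \<in> I" if "finite A" for A
  proof -
    have "Delta A = {}" unfolding Delta_def using that by auto
    then show ?thesis using mem_if_Delta \<open>{} \<in> I\<close> by simp
  qed
  have mem_if_thin: "B \<in> I" if "thin B" for B
    using mem_if_Delta mem_if_finite finite_Delta_if_thin[OF that] by blast
  obtain \<phi> :: "'a \<times> nat \<Rightarrow> 'a"
    where "inj (\<lambda>p. fst p + \<phi> p)" "thin (range \<phi>)" "thin (range (\<lambda>p. fst p + \<phi> p))"
    using exists_thin_translate_pair[OF inf] .
  then have "range \<phi> \<union> range (\<lambda>p. fst p + \<phi> p) \<in> I"
    and "Delta (range \<phi> \<union> range (\<lambda>p. fst p + \<phi> p)) = UNIV"
    using Un mem_if_thin Delta_translate_pair_eq_UNIV by blast+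
  then have "UNIV \<in> I" using \<open>Delta_complete I\<close> unfolding Delta_complete_def by metis
  then show ?thesis using sub by blast
qed

theorem theorem7p4:
  assumes "infinite (UNIV :: 'a::group_add set)"
  shows "(Nabla_complete {A :: 'a set. small A} \<and> Nabla_complete {A :: 'a set. sparse A})
    \<and> (\<forall>I :: 'a set set. I \<noteq> {} \<longrightarrow> (\<forall>A\<in>I. \<forall>B\<in>I. A \<union> B \<in> I) \<longrightarrow>
            (\<forall>A\<in>I. \<forall>B. B \<subseteq> A \<longrightarrow> B \<in> I) \<longrightarrow>
            Delta_complete I \<longrightarrow> Nabla_complete I \<longrightarrow> I = Pow UNIV)
    \<and> \<not> (\<exists>I :: 'a set set. ideal_of I \<and> Delta_complete I \<and> Nabla_complete I)
    \<and> (\<forall>I :: 'a set set. group_ideal I \<longrightarrow> Delta_complete I \<and> (\<forall>A\<in>I. small A))"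
proof (intro conjI allI impI)
  show "Nabla_complete {A :: 'a set. small A}"
    unfolding Nabla_complete_def Nabla_def using small_if_small_Delta[OF assms] by blast
  show "Nabla_complete {A :: 'a set. sparse A}"
    unfolding Nabla_complete_def Nabla_def using sparse_if_sparse_Delta by blast
  show "I = Pow UNIV"
    if "I \<noteq> {}" "\<forall>A\<in>I. \<forall>B\<in>I. A \<union> B \<in> I" "\<forall>A\<in>I. \<forall>B. B \<subseteq> A \<longrightarrow> B \<in> I"
      "Delta_complete I" "Nabla_complete I" for I :: "'a set set"
    using eq_Pow_UNIV_if_Delta_complete_Nabla_complete[OF assms that] .
  show "\<not> (\<exists>I :: 'a set set. ideal_of I \<and> Delta_complete I \<and> Nabla_complete I)"
    using eq_Pow_UNIV_if_Delta_complete_Nabla_complete[OF assms] unfolding ideal_of_def by blast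
  show "Delta_complete I" if "group_ideal I" for I :: "'a set set"
    unfolding Delta_complete_def using group_ideal_Delta[OF that] by blast
  show "\<forall>A\<in>I. small A" if "group_ideal I" for I :: "'a set set"
    using small_if_group_ideal[OF that] by blast
qed

end
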